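(* Let $(\mathcal S,\mathcal A,P,r)$ be a finite MDP such that $\mathcal P^\pi g^\star=g^\star$ for every policy $\pi$, and let $(g^\star,h^\star)$ be a solution of the modified Bellman equations. Let $\lambda_{k+1}\le\lambda_k<1$ for $k\ge1$, set $\lambda_0=1$, let $V^0\in\mathbb R^n$, $V^k=\lambda_kV^0+(1-\lambda_k)TV^{k-1}$ for $k\ge1$, and let $\pi_k$ be greedy policies, $T^{\pi_k}V^k=TV^k$. Then there exists $K>0$ such that for all $k>K$, \[\|g^\star-g^{\pi_k}\|_\infty\le\|TV^k-V^k-g^\star\|_\infty\le2\Big(\sum_{i=0}^k\prod_{j=i+1}^k(1-\lambda_j)\lambda_i^2\Big)\|V^0-h^\star\|_\infty.\]
   Context: An MDP $(\mathcal S,\mathcal A,P,r)$ has finite state space $\mathcal S$ ($|\mathcal S|=n$, functions identified with $\mathbb R^n$), finite action space, transition probabilities $P(s'\mid s,a)$ and bounded reward $r$. For a policy $\pi$: $r^\pi(s)=\sum_a\pi(a\mid s)r(s,a)$, $\mathcal P^\pi(s,s')=\sum_a\pi(a\mid s)P(s'\mid s,a)$, $g^\pi(s)=\liminf_{T\to\infty}\frac1T\mathbb E_\pi[\sum_{t=0}^{T-1}r(s_t,a_t)\mid s_0=s]$, $g^\star=\max_\pi g^\pi$. $T^\pi V=r^\pi+\mathcal P^\pi V$, $(TV)(s)=\max_a\{r(s,a)+\sum_{s'}P(s'\mid s,a)V(s')\}$. A pair $(g,h)$ solves the modified Bellman equations if $\max_a\sum_{s'}P(s'\mid s,a)g(s')=g(s)$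 and $\max_a\{r(s,a)+\sum_{s'}P(s'\mid s,a)h(s')\}=h(s)+g(s)$ for all $s$, with some policy attaining both maxima simultaneously; the first component of any solution equals $g^\star$. The convention $\lambda_0=1$ is the paper's; products over empty index ranges equal $1$. *)

theory Defs
  imports "HOL-Analysis.Analysis"
begin

definition is_mdp :: "('s::finite \<Rightarrow> 'a::finite \<Rightarrow> 's \<Rightarrow> real) \<Rightarrow> bool" where
  "is_mdp P \<longleftrightarrow> (\<forall>s a s'. 0 \<le> P s a s') \<and> (\<forall>s a. (\<Sum>s'\<in>UNIV. P s a s') = 1)"

definition is_policy :: "('s::finite \<Rightarrow> 'a::finite \<Rightarrow> real) \<Rightarrow> bool" where
  "is_policy pol \<longleftrightarrow> (\<forall>s a. 0 \<le> pol s a) \<and> (\<forall>s. (\<Sum>a\<in>UNIV. pol s a) = 1)"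

definition r_pi :: "('s::finite \<Rightarrow> 'a::finite \<Rightarrow> real) \<Rightarrow> ('s \<Rightarrow> 'a \<Rightarrow> real) \<Rightarrow> 's \<Rightarrow> real" where
  "r_pi r pol s = (\<Sum>a\<in>UNIV. pol s a * r s a)"

definition P_pi :: "('s::finite \<Rightarrow> 'a::finite \<Rightarrow> 's \<Rightarrow> real) \<Rightarrow> ('s \<Rightarrow> 'a \<Rightarrow> real) \<Rightarrow> 's \<Rightarrow> 's \<Rightarrow> real" where
  "P_pi P pol s s' = (\<Sum>a\<in>UNIV. pol s a * P s a s')"

definition P_op :: "('s::finite \<Rightarrow> 'a::finite \<Rightarrow> 's \<Rightarrow> real) \<Rightarrow> ('s \<Rightarrow> 'a \<Rightarrow> real) \<Rightarrow> ('s \<Rightarrow> real) \<Rightarrow> 's \<Rightarrow> real" where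
  "P_op P pol V s = (\<Sum>s'\<in>UNIV. P_pi P pol s s' * V s')"

definition T_pi :: "('s::finite \<Rightarrow> 'a::finite \<Rightarrow> 's \<Rightarrow> real) \<Rightarrow> ('s \<Rightarrow> 'a \<Rightarrow> real) \<Rightarrow> ('s \<Rightarrow> 'a \<Rightarrow> real) \<Rightarrow> ('s \<Rightarrow> real) \<Rightarrow> 's \<Rightarrow> real" where
  "T_pi P r pol V s = r_pi r pol s + P_op P pol V s"

definition T_opt :: "('s::finite \<Rightarrow> 'a::finite \<Rightarrow> 's \<Rightarrow> real) \<Rightarrow> ('s \<Rightarrow> 'a \<Rightarrow> real) \<Rightarrow> ('s \<Rightarrow> real) \<Rightarrow> 's \<Rightarrow> real" where
  "T_opt P r V s = Max (range (\<lambda>a. r s a + (\<Sum>s'\<in>UNIV. P s a s' * V s')))"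

text \<open>E_pi[ r(s_t,a_t) | s_0 = s ] = ((P^pol)^t r^pol)(s); gain is the liminf of Cesaro averages.\<close>
definition expected_reward :: "('s::finite \<Rightarrow> 'a::finite \<Rightarrow> 's \<Rightarrow> real) \<Rightarrow> ('s \<Rightarrow> 'a \<Rightarrow> real) \<Rightarrow> ('s \<Rightarrow> 'a \<Rightarrow> real) \<Rightarrow> nat \<Rightarrow> 's \<Rightarrow> real" where
  "expected_reward P r pol t = (P_op P pol ^^ t) (r_pi r pol)"

definition gain :: "('s::finite \<Rightarrow> 'a::finite \<Rightarrow> 's \<Rightarrow> real) \<Rightarrow> ('s \<Rightarrow> 'a \<Rightarrow> real) \<Rightarrow> ('s \<Rightarrow> 'a \<Rightarrow> real) \<Rightarrow> 's \<Rightarrow> real" where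
  "gain P r pol s = real_of_ereal (liminf (\<lambda>T::nat. ereal ((1 / real T) * (\<Sum>t<T. expected_reward P r pol t s))))"

definition opt_gain :: "('s::finite \<Rightarrow> 'a::finite \<Rightarrow> 's \<Rightarrow> real) \<Rightarrow> ('s \<Rightarrow> 'a \<Rightarrow> real) \<Rightarrow> 's \<Rightarrow> real" where
  "opt_gain P r s = (SUP pol\<in>{pol. is_policy pol}. gain P r pol s)"

definition modified_bellman :: "('s::finite \<Rightarrow> 'a::finite \<Rightarrow> 's \<Rightarrow> real) \<Rightarrow> ('s \<Rightarrow> 'a \<Rightarrow> real) \<Rightarrow> ('s \<Rightarrow> real) \<Rightarrow> ('s \<Rightarrow> real) \<Rightarrow> bool" where
  "modified_bellman P r g h \<longleftrightarrow>
     (\<forall>s. Max (range (\<lambda>a. \<Sum>s'\<in>UNIV. P s a s' * g s')) = g s) \<and>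
     (\<forall>s. Max (range (\<lambda>a. r s a + (\<Sum>s'\<in>UNIV. P s a s' * h s'))) = h s + g s) \<and>
     (\<exists>pol. is_policy pol \<and> (\<forall>s. P_op P pol g s = g s \<and> T_pi P r pol h s = h s + g s))"

definition supnorm :: "('s::finite \<Rightarrow> real) \<Rightarrow> real" where
  "supnorm f = Max (range (\<lambda>s. \<bar>f s\<bar>))"

end

theory Submission
  imports Defs
begin

text \<open>Since every policy leaves \<open>g\<^sup>\<star>\<close> invariant, the Bellman operator commutes with adding
  multiples of \<open>g\<^sup>\<star>\<close>. Writing \<open>V\<^sub>k = h\<^sup>\<star> + W\<^sub>k + c\<^sub>k g\<^sup>\<star>\<close> for a suitable scalar drift \<open>c\<^sub>k\<close>
  turns the anchored iteration into a Halpern iteration \<open>W\<^sub>k = \<lambda>\<^sub>k W\<^sub>0 + (1 - \<lambda>\<^sub>k) N W\<^sub>k\<^sub>-\<^sub>1\<close>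
  for the sup-norm nonexpansive map \<open>N W = T(h\<^sup>\<star> + W) - h\<^sup>\<star> - g\<^sup>\<star>\<close>, which fixes \<open>0\<close>; the
  Bellman residual \<open>TV\<^sub>k - V\<^sub>k - g\<^sup>\<star>\<close> equals \<open>N W\<^sub>k - W\<^sub>k\<close>. The standard Halpern
  estimate, obtained by bounding \<open>\<parallel>W\<^sub>k\<^sub>+\<^sub>1 - W\<^sub>k\<parallel>\<close> inductively, gives the second inequality.
  For the first, the greedy policy satisfies \<open>r\<^sup>\<pi> = V + g\<^sup>\<star> + e - \<P>\<^sup>\<pi> V\<close> with \<open>e\<close> the
  residual; summing along the chain telescopes, and the Cesaro averages of the rewards
  stay within \<open>\<parallel>e\<parallel>\<^sub>\<infinity> + O(1/T)\<close> of \<open>g\<^sup>\<star>\<close>.\<close>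

lemma Max_range_le_shift:
  fixes f g :: "'a::finite \<Rightarrow> real"
  assumes "\<And>a. f a \<le> g a + M"
  shows "Max (range f) \<le> Max (range g) + M"
proof -
  have "Max (range f) \<in> range f" by (rule Max_in) auto
  then obtain a where "Max (range f) = f a" by blast
  also have "\<dots> \<le> g a + M" by (rule assms)
  also have "g a \<le> Max (range g)" by (rule Max_ge) auto
  finally show ?thesis by simp
qed

lemma abs_convex_comb_le:
  fixes w x :: "'s::finite \<Rightarrow> real"
  assumes "\<And>s. 0 \<le> w s" "sum w UNIV = 1" "\<And>s. \<bar>x s\<bar> \<le> M"
  shows "\<bar>\<Sum>s\<in>UNIV. w s * x s\<bar> \<le> M"
proof -
  have "\<bar>\<Sum>s\<in>UNIV. w s * x s\<bar> \<le> (\<Sum>s\<in>UNIV. w s * M)"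
    using assms(1,3) by (intro order_trans[OF sum_abs] sum_mono) (simp add: abs_mult mult_left_mono)
  also have "\<dots> = M" using assms(2) by (simp add: sum_distrib_right[symmetric])
  finally show ?thesis .
qed

lemma abs_lincomb_le:
  fixes a b x y :: real
  assumes "0 \<le> a" "0 \<le> b" "\<bar>x\<bar> \<le> X" "\<bar>y\<bar> \<le> Y"
  shows "\<bar>a * x + b * y\<bar> \<le> a * X + b * Y"
proof -
  have "\<bar>a * x + b * y\<bar> \<le> a * \<bar>x\<bar> + b * \<bar>y\<bar>"
    using assms(1,2) abs_triangle_ineq[of "a * x" "b * y"] by (simp add: abs_mult)
  also have "\<dots> \<le> a * X + b * Y"
    using assms by (intro add_mono mult_left_mono) auto
  finally show ?thesis .
qed

lemma abs_le_supnorm: "\<bar>f s\<bar> \<le> supnorm f"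
  unfolding supnorm_def by (rule Max_ge) auto

lemma supnorm_leI: "(\<And>s. \<bar>f s\<bar> \<le> B) \<Longrightarrow> supnorm f \<le> B"
  unfolding supnorm_def by (rule Max.boundedI) auto

subsection \<open>The Bellman operator\<close>

lemma T_opt_nonexpansive:
  assumes mdp: "is_mdp P" and dist: "\<And>s. \<bar>U s - U' s\<bar> \<le> M"
  shows "\<bar>T_opt P r U s - T_opt P r U' s\<bar> \<le> M"
proof -
  have diff: "\<bar>(\<Sum>s'\<in>UNIV. P s a s' * U s') - (\<Sum>s'\<in>UNIV. P s a s' * U' s')\<bar> \<le> M" for a
  proof -
    have "\<bar>\<Sum>s'\<in>UNIV. P s a s' * (U s' - U' s')\<bar> \<le> M"
      using mdp dist by (intro abs_convex_comb_le) (auto simp: is_mdp_def)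
    then show ?thesis by (simp add: sum_subtractf right_diff_distrib)
  qed
  have sum_le: "(\<Sum>s'\<in>UNIV. P s a s' * U s') \<le> (\<Sum>s'\<in>UNIV. P s a s' * U' s') + M"
    "(\<Sum>s'\<in>UNIV. P s a s' * U' s') \<le> (\<Sum>s'\<in>UNIV. P s a s' * U s') + M" for a
    using diff[of a] by (simp_all add: abs_diff_le_iff)
  have "T_opt P r U s \<le> T_opt P r U' s + M" "T_opt P r U' s \<le> T_opt P r U s + M"
    unfolding T_opt_def by (rule Max_range_le_shift, simp add: sum_le)+
  then show ?thesis by linarith
qed

lemma T_opt_add_invariant:
  assumes inv: "\<And>a. (\<Sum>s'\<in>UNIV. P s a s' * g s') = g s"
  shows "T_opt P r (\<lambda>s'. U s' + c * g s') s = T_opt P r U s + c * g s"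
proof -
  have shift: "r s a + (\<Sum>s'\<in>UNIV. P s a s' * (U s' + c * g s'))
      = (r s a + (\<Sum>s'\<in>UNIV. P s a s' * U s')) + c * g s" for a
  proof -
    have "(\<Sum>s'\<in>UNIV. P s a s' * (U s' + c * g s'))
        = (\<Sum>s'\<in>UNIV. P s a s' * U s') + c * (\<Sum>s'\<in>UNIV. P s a s' * g s')"
      by (simp add: distrib_left sum.distrib sum_distrib_left algebra_simps)
    then show ?thesis using inv[of a] by simp
  qed
  have "T_opt P r (\<lambda>s'. U s' + c * g s') s \<le> T_opt P r U s + c * g s"
    "T_opt P r U s \<le> T_opt P r (\<lambda>s'. U s' + c * g s') s + (- c * g s)"
    unfolding T_opt_def by (rule Max_range_le_shift, simp add: shift)+
  then show ?thesis by linarith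
qed

lemma action_invariant_if_policy_invariant:
  fixes P :: "'s::finite \<Rightarrow> 'a::finite \<Rightarrow> 's \<Rightarrow> real"
  assumes inv: "\<And>pol. is_policy pol \<Longrightarrow> P_op P pol g = g"
  shows "(\<Sum>s'\<in>UNIV. P s a s' * g s') = g s"
proof -
  define pol :: "'s \<Rightarrow> 'a \<Rightarrow> real" where "pol = (\<lambda>_ a'. if a' = a then 1 else 0)"
  have "is_policy pol" unfolding is_policy_def pol_def by simp
  moreover have "P_pi P pol s s' = P s a s'" for s'
  proof -
    have "P_pi P pol s s' = (\<Sum>a'\<in>UNIV. if a' = a then P s a' s' else 0)"
      unfolding P_pi_def pol_def by (rule sum.cong) auto
    then show ?thesis by simp
  qed
  ultimately show ?thesis
    using inv unfolding P_op_def by (metis (no_types, lifting) sum.cong)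
qed

subsection \<open>The Halpern iteration\<close>

definition halpern_rate :: "(nat \<Rightarrow> real) \<Rightarrow> nat \<Rightarrow> real" where
  "halpern_rate lam k = (\<Sum>i=0..k. (\<Prod>j=i+1..k. (1 - lam j)) * (lam i)\<^sup>2)"

lemma halpern_rate_0: "halpern_rate lam 0 = (lam 0)\<^sup>2"
  by (simp add: halpern_rate_def)

lemma halpern_rate_Suc:
  "halpern_rate lam (Suc k) = (1 - lam (Suc k)) * halpern_rate lam k + (lam (Suc k))\<^sup>2"
proof -
  have "halpern_rate lam (Suc k)
      = (\<Sum>i=0..k. (\<Prod>j=i+1..Suc k. (1 - lam j)) * (lam i)\<^sup>2) + (lam (Suc k))\<^sup>2"
    by (simp add: halpern_rate_def)
  also have "(\<Sum>i=0..k. (\<Prod>j=i+1..Suc k. (1 - lam j)) * (lam i)\<^sup>2)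
      = (\<Sum>i=0..k. (1 - lam (Suc k)) * ((\<Prod>j=i+1..k. (1 - lam j)) * (lam i)\<^sup>2))"
    by (rule sum.cong) (auto simp: prod.nat_ivl_Suc')
  finally show ?thesis by (simp add: halpern_rate_def sum_distrib_left)
qed

locale halpern_iteration =
  fixes N :: "('s \<Rightarrow> real) \<Rightarrow> 's \<Rightarrow> real"
    and lam :: "nat \<Rightarrow> real"
    and W :: "nat \<Rightarrow> 's \<Rightarrow> real"
    and R :: real
  assumes nonexpansive: "\<And>X Y M s. (\<And>s. \<bar>X s - Y s\<bar> \<le> M) \<Longrightarrow> \<bar>N X s - N Y s\<bar> \<le> M"
    and fixes_zero: "N (\<lambda>s. 0) = (\<lambda>s. 0)"
    and lam_0: "lam 0 = 1"
    and lam_antimono: "\<And>k. k \<ge> 1 \<Longrightarrow> lam (Suc k) \<le> lam k"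
    and lam_le_1: "\<And>k. lam k \<le> 1"
    and lam_nonneg: "\<And>k. 0 \<le> lam k"
    and W_Suc: "\<And>k. W (Suc k) = (\<lambda>s. lam (Suc k) * W 0 s + (1 - lam (Suc k)) * N (W k) s)"
    and W_0_bounded: "\<And>s. \<bar>W 0 s\<bar> \<le> R"
begin

lemma N_bounded: "(\<And>s. \<bar>X s\<bar> \<le> M) \<Longrightarrow> \<bar>N X s\<bar> \<le> M"
  using nonexpansive[of X "\<lambda>s. 0" M s] fixes_zero by simp

lemma W_bounded: "\<bar>W k s\<bar> \<le> R"
proof (induction k arbitrary: s)
  case 0
  then show ?case by (rule W_0_bounded)
next
  case (Suc k)
  let ?l = "lam (Suc k)"
  have "\<bar>W (Suc k) s\<bar> \<le> ?l * \<bar>W 0 s\<bar> + (1 - ?l) * \<bar>N (W k) s\<bar>"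
    using lam_nonneg[of "Suc k"] lam_le_1[of "Suc k"]
    by (simp add: W_Suc abs_mult order_trans[OF abs_triangle_ineq])
  also have "\<dots> \<le> ?l * R + (1 - ?l) * R"
    using lam_nonneg[of "Suc k"] lam_le_1[of "Suc k"] W_0_bounded N_bounded[OF Suc.IH]
    by (intro add_mono mult_left_mono) auto
  finally show ?case by (simp add: algebra_simps)
qed

lemma N_W_bounded: "\<bar>N (W k) s\<bar> \<le> R"
  by (rule N_bounded) (rule W_bounded)

lemma W_Suc_diff_bound: "\<bar>W (Suc k) s - W k s\<bar> \<le> (2 * halpern_rate lam k - 2 * lam (Suc k)) * R"
proof (induction k arbitrary: s)
  case 0
  have "W (Suc 0) s - W 0 s = (1 - lam 1) * (N (W 0) s - W 0 s)"
    by (simp add: W_Suc algebra_simps)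
  then have "\<bar>W (Suc 0) s - W 0 s\<bar> = (1 - lam 1) * \<bar>N (W 0) s - W 0 s\<bar>"
    using lam_le_1[of 1] by (simp add: abs_mult)
  also have "\<dots> \<le> (1 - lam 1) * (2 * R)"
    using lam_le_1[of 1] N_W_bounded[of 0 s] W_0_bounded[of s] by (intro mult_left_mono) auto
  finally show ?case by (simp add: halpern_rate_0 lam_0 algebra_simps)
next
  case (Suc k)
  let ?a = "lam (Suc (Suc k))" and ?b = "lam (Suc k)"
  have "W (Suc (Suc k)) s - W (Suc k) s
      = (?b - ?a) * (N (W (Suc k)) s - W 0 s) + (1 - ?b) * (N (W (Suc k)) s - N (W k) s)"
    by (simp add: W_Suc algebra_simps)
  also have "\<bar>\<dots>\<bar> \<le> (?b - ?a) * (2 * R) + (1 - ?b) * ((2 * halpern_rate lam k - 2 * ?b) * R)"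
  proof (rule abs_lincomb_le)
    show "\<bar>N (W (Suc k)) s - W 0 s\<bar> \<le> 2 * R"
      using N_W_bounded[of "Suc k" s] W_0_bounded[of s] by linarith
    show "\<bar>N (W (Suc k)) s - N (W k) s\<bar> \<le> (2 * halpern_rate lam k - 2 * ?b) * R"
      by (rule nonexpansive) (rule Suc.IH)
  qed (use lam_antimono[of "Suc k"] lam_le_1[of "Suc k"] in auto)
  also have "\<dots> = (2 * halpern_rate lam (Suc k) - 2 * ?a) * R"
    by (simp add: halpern_rate_Suc algebra_simps power2_eq_square)
  finally show ?case .
qed

theorem residual_bound: "\<bar>N (W k) s - W k s\<bar> \<le> 2 * halpern_rate lam k * R"
proof (cases k)
  case 0
  then show ?thesis
    using N_W_bounded[of 0 s] W_0_bounded[of s] by (simp add: halpern_rate_0 lam_0)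
next
  case (Suc m)
  let ?b = "lam (Suc m)"
  have "N (W (Suc m)) s - W (Suc m) s
      = ?b * (N (W (Suc m)) s - W 0 s) + (1 - ?b) * (N (W (Suc m)) s - N (W m) s)"
    by (simp add: W_Suc algebra_simps)
  also have "\<bar>\<dots>\<bar> \<le> ?b * (2 * R) + (1 - ?b) * ((2 * halpern_rate lam m - 2 * ?b) * R)"
  proof (rule abs_lincomb_le)
    show "\<bar>N (W (Suc m)) s - W 0 s\<bar> \<le> 2 * R"
      using N_W_bounded[of "Suc m" s] W_0_bounded[of s] by linarith
    show "\<bar>N (W (Suc m)) s - N (W m) s\<bar> \<le> (2 * halpern_rate lam m - 2 * ?b) * R"
      by (rule nonexpansive) (rule W_Suc_diff_bound)
  qed (use lam_nonneg[of "Suc m"] lam_le_1[of "Suc m"] in auto)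
  also have "\<dots> = 2 * halpern_rate lam (Suc m) * R"
    by (simp add: halpern_rate_Suc algebra_simps power2_eq_square)
  finally show ?thesis using Suc by simp
qed

end

subsection \<open>Gain of a policy\<close>

lemma P_op_add: "P_op P pol (\<lambda>s. f s + g s) = (\<lambda>s. P_op P pol f s + P_op P pol g s)"
  by (auto simp: P_op_def sum.distrib distrib_left)

lemma P_op_diff: "P_op P pol (\<lambda>s. f s - g s) = (\<lambda>s. P_op P pol f s - P_op P pol g s)"
  by (auto simp: P_op_def sum_subtractf right_diff_distrib)

lemma P_op_pow_add:
  "(P_op P pol ^^ t) (\<lambda>s. f s + g s) = (\<lambda>s. (P_op P pol ^^ t) f s + (P_op P pol ^^ t) g s)"
  by (induction t) (auto simp: P_op_add)

lemma P_op_pow_diff: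
  "(P_op P pol ^^ t) (\<lambda>s. f s - g s) = (\<lambda>s. (P_op P pol ^^ t) f s - (P_op P pol ^^ t) g s)"
  by (induction t) (auto simp: P_op_diff)

lemma P_op_pow_fixed: "P_op P pol g = g \<Longrightarrow> (P_op P pol ^^ t) g = g"
  by (induction t) auto

lemma P_pi_stochastic:
  assumes "is_mdp P" "is_policy pol"
  shows "0 \<le> P_pi P pol s s'" "(\<Sum>s'\<in>UNIV. P_pi P pol s s') = 1"
proof -
  show "0 \<le> P_pi P pol s s'"
    using assms unfolding P_pi_def is_mdp_def is_policy_def by (auto intro!: sum_nonneg)
  have "(\<Sum>s'\<in>UNIV. P_pi P pol s s') = (\<Sum>a\<in>UNIV. pol s a * (\<Sum>s'\<in>UNIV. P s a s'))"
    unfolding P_pi_def by (subst sum.swap) (simp add: sum_distrib_left)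
  also have "\<dots> = 1" using assms unfolding is_mdp_def is_policy_def by simp
  finally show "(\<Sum>s'\<in>UNIV. P_pi P pol s s') = 1" .
qed

lemma P_op_pow_bounded:
  assumes "is_mdp P" "is_policy pol" "\<And>s. \<bar>f s\<bar> \<le> M"
  shows "\<bar>(P_op P pol ^^ t) f s\<bar> \<le> M"
proof (induction t arbitrary: s)
  case 0
  then show ?case using assms(3) by simp
next
  case (Suc t)
  have "\<bar>P_op P pol ((P_op P pol ^^ t) f) s\<bar> \<le> M"
    unfolding P_op_def[of P pol "(P_op P pol ^^ t) f"]
    using P_pi_stochastic[OF assms(1,2)] Suc.IH by (intro abs_convex_comb_le) auto
  then show ?case by simp
qed

lemma expected_reward_sum_telescope:
  fixes P :: "'s::finite \<Rightarrow> 'a::finite \<Rightarrow> 's \<Rightarrow> real" and r :: "'s \<Rightarrow> 'a \<Rightarrow> real"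
    and V :: "'s \<Rightarrow> real"
  assumes inv: "P_op P pol g = g"
  defines "e \<equiv> \<lambda>s. T_pi P r pol V s - V s - g s"
  shows "(\<Sum>t<T. expected_reward P r pol t s)
      = (\<Sum>t<T. (P_op P pol ^^ t) e s) + real T * g s + V s - (P_op P pol ^^ T) V s"
proof -
  let ?Q = "P_op P pol"
  have reward: "r_pi r pol = (\<lambda>s. ((V s + g s) + e s) - ?Q V s)"
    unfolding e_def T_pi_def by auto
  have step: "expected_reward P r pol t s
      = (?Q ^^ t) V s + g s + (?Q ^^ t) e s - (?Q ^^ Suc t) V s" for t
    unfolding expected_reward_def reward P_op_pow_diff P_op_pow_add P_op_pow_fixed[OF inv]
    by (simp add: funpow_swap1)
  show ?thesis
  proof (induction T)
    case (Suc T)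
    then show ?case
      using step[of T] by (simp del: funpow.simps add: algebra_simps)
  qed simp
qed

lemma real_liminf_close:
  fixes a :: "nat \<Rightarrow> real"
  assumes "\<And>T. T \<ge> 1 \<Longrightarrow> \<bar>a T - x\<bar> \<le> \<epsilon> + C / real T"
  shows "\<bar>x - real_of_ereal (liminf (\<lambda>T. ereal (a T)))\<bar> \<le> \<epsilon>"
proof -
  have C_over_T: "(\<lambda>T. C / real T) \<longlonglongrightarrow> 0" by (rule lim_const_over_n)
  have "(\<lambda>T. ereal (x - \<epsilon> - C / real T)) \<longlonglongrightarrow> ereal (x - \<epsilon>)"
    "(\<lambda>T. ereal (x + \<epsilon> + C / real T)) \<longlonglongrightarrow> ereal (x + \<epsilon>)"
    unfolding lim_ereal using C_over_T by (auto intro: tendsto_eq_intros)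
  moreover have "x - \<epsilon> - C / real T \<le> a T \<and> a T \<le> x + \<epsilon> + C / real T" if "T \<ge> 1" for T
    using assms[OF that] by (auto simp: abs_le_iff)
  then have "eventually (\<lambda>T. ereal (x - \<epsilon> - C / real T) \<le> ereal (a T)) sequentially"
    "eventually (\<lambda>T. ereal (a T) \<le> ereal (x + \<epsilon> + C / real T)) sequentially"
    by (auto intro: eventually_sequentiallyI[of 1])
  ultimately have "ereal (x - \<epsilon>) \<le> liminf (\<lambda>T. ereal (a T))"
    "liminf (\<lambda>T. ereal (a T)) \<le> ereal (x + \<epsilon>)"
    by (metis Liminf_mono lim_imp_Liminf trivial_limit_sequentially)+
  then show ?thesis
    by (cases "liminf (\<lambda>T. ereal (a T))") auto
qed

lemma gain_error_le:
  fixes P :: "'s::finite \<Rightarrow> 'a::finite \<Rightarrow> 's \<Rightarrow> real"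
  assumes mdp: "is_mdp P" and pol: "is_policy pol"
    and inv: "P_op P pol g = g"
    and residual: "\<And>s. \<bar>T_pi P r pol V s - V s - g s\<bar> \<le> \<epsilon>"
  shows "\<bar>g s - gain P r pol s\<bar> \<le> \<epsilon>"
  unfolding gain_def
proof (rule real_liminf_close)
  let ?Q = "P_op P pol"
  define e where "e = (\<lambda>s. T_pi P r pol V s - V s - g s)"
  define C where "C = (\<Sum>s\<in>UNIV. \<bar>V s\<bar>)"
  have V_bounded: "\<bar>(?Q ^^ t) V s\<bar> \<le> C" for t s
    unfolding C_def by (rule P_op_pow_bounded[OF mdp pol]) (rule member_le_sum, auto)
  have residual_sum: "\<bar>\<Sum>t<T. (?Q ^^ t) e s\<bar> \<le> real T * \<epsilon>" for T
  proof -
    have "(\<Sum>t<T. \<bar>(?Q ^^ t) e s\<bar>) \<le> (\<Sum>t<T. \<epsilon>)"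
      unfolding e_def by (intro sum_mono P_op_pow_bounded[OF mdp pol residual])
    then show ?thesis by (simp add: order_trans[OF sum_abs])
  qed
  have telescope: "(\<Sum>t<T. expected_reward P r pol t s)
      = (\<Sum>t<T. (?Q ^^ t) e s) + real T * g s + V s - (?Q ^^ T) V s" for T
    unfolding e_def by (rule expected_reward_sum_telescope[OF inv])
  fix T :: nat
  assume "T \<ge> 1"
  then have "real T > 0" by simp
  have "\<bar>(1 / real T) * (\<Sum>t<T. expected_reward P r pol t s) - g s\<bar>
      = \<bar>(\<Sum>t<T. (?Q ^^ t) e s) + (V s - (?Q ^^ T) V s)\<bar> / real T"
    using \<open>real T > 0\<close> by (simp add: telescope field_simps)
  also have "\<dots> \<le> (real T * \<epsilon> + 2 * C) / real T"
    using residual_sum[of T] V_bounded[of 0 s] V_bounded[of T s] \<open>real T > 0\<close>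
    by (intro divide_right_mono) auto
  also have "\<dots> = \<epsilon> + 2 * C / real T"
    using \<open>real T > 0\<close> by (simp add: field_simps)
  finally show "\<bar>(1 / real T) * (\<Sum>t<T. expected_reward P r pol t s) - g s\<bar> \<le> \<epsilon> + 2 * C / real T" .
qed

subsection \<open>Anchored value iteration\<close>

lemma anchored_vi_residual_bound:
  fixes P :: "'s::finite \<Rightarrow> 'a::finite \<Rightarrow> 's \<Rightarrow> real" and V :: "nat \<Rightarrow> 's \<Rightarrow> real"
  assumes mdp: "is_mdp P"
    and g_invariant: "\<And>s a. (\<Sum>s'\<in>UNIV. P s a s' * g s') = g s"
    and h_bellman: "\<And>s. T_opt P r h s = h s + g s"
    and lam_0: "lam 0 = 1"
    and lam_antimono: "\<And>k. k \<ge> 1 \<Longrightarrow> lam (Suc k) \<le> lam k"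
    and lam_le_1: "\<And>k. lam k \<le> 1"
    and lam_nonneg: "\<And>k. 0 \<le> lam k"
    and V_Suc: "\<And>k. V (Suc k) = (\<lambda>s. lam (Suc k) * V 0 s + (1 - lam (Suc k)) * T_opt P r (V k) s)"
  shows "\<bar>T_opt P r (V k) s - V k s - g s\<bar> \<le> 2 * halpern_rate lam k * supnorm (\<lambda>s. V 0 s - h s)"
proof -
  define N where "N X = (\<lambda>s. T_opt P r (\<lambda>s'. h s' + X s') s - h s - g s)" for X
  \<comment> \<open>the coefficient of \<open>g\<close> in \<open>V k - h\<close>, forced by \<open>T (U + c g) = T U + c g\<close> and \<open>T h = h + g\<close>\<close>
  define c where "c = rec_nat 0 (\<lambda>k c\<^sub>k. (1 - lam (Suc k)) * (1 + c\<^sub>k))"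
  define W where "W k = (\<lambda>s. V k s - h s - c k * g s)" for k
  have T_V: "T_opt P r (V k) s = N (W k) s + h s + g s + c k * g s" for k s
  proof -
    have "V k = (\<lambda>s'. (h s' + W k s') + c k * g s')" unfolding W_def by auto
    then show ?thesis
      using T_opt_add_invariant[of P s g r "\<lambda>s'. h s' + W k s'" "c k"] g_invariant
      by (simp add: N_def)
  qed
  interpret halpern_iteration N lam W "supnorm (\<lambda>s. V 0 s - h s)"
  proof
    show "\<bar>N X s - N Y s\<bar> \<le> M" if "\<And>s. \<bar>X s - Y s\<bar> \<le> M" for X Y M s
      using T_opt_nonexpansive[OF mdp, of "\<lambda>s'. h s' + X s'" "\<lambda>s'. h s' + Y s'" M r s] that
      by (simp add: N_def)
    show "N (\<lambda>s. 0) = (\<lambda>s. 0)"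
      by (simp add: N_def h_bellman)
    show "W (Suc k) = (\<lambda>s. lam (Suc k) * W 0 s + (1 - lam (Suc k)) * N (W k) s)" for k
      by (auto simp: W_def c_def V_Suc T_V algebra_simps)
    show "\<bar>W 0 s\<bar> \<le> supnorm (\<lambda>s. V 0 s - h s)" for s
      using abs_le_supnorm[of "\<lambda>s. V 0 s - h s" s] by (simp add: W_def c_def)
  qed (fact lam_0 lam_antimono lam_le_1 lam_nonneg)+
  have "T_opt P r (V k) s - V k s - g s = N (W k) s - W k s"
    by (simp add: T_V W_def)
  then show ?thesis
    using residual_bound by simp
qed

theorem corollary5:
  fixes P :: "'s::finite \<Rightarrow> 'a::finite \<Rightarrow> 's \<Rightarrow> real"
    and r :: "'s \<Rightarrow> 'a \<Rightarrow> real"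
    and h :: "'s \<Rightarrow> real"
    and lam :: "nat \<Rightarrow> real"
    and V :: "nat \<Rightarrow> 's \<Rightarrow> real"
    and pik :: "nat \<Rightarrow> 's \<Rightarrow> 'a \<Rightarrow> real"
  assumes mdp: "is_mdp P"
    and gstar_inv: "\<And>pol. is_policy pol \<Longrightarrow> P_op P pol (opt_gain P r) = opt_gain P r"
    and mbe: "modified_bellman P r (opt_gain P r) h"
    and lam0: "lam 0 = 1"
    and lam_mono: "\<And>k. k \<ge> 1 \<Longrightarrow> lam (Suc k) \<le> lam k"
    and lam_lt1: "\<And>k. k \<ge> 1 \<Longrightarrow> lam k < 1"
    and lam_nonneg: "\<And>k. 0 \<le> lam k"
    and V_rec: "\<And>k. k \<ge> 1 \<Longrightarrow> V k = (\<lambda>s. lam k * V 0 s + (1 - lam k) * T_opt P r (V (k - 1)) s)"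
    and pik_policy: "\<And>k. is_policy (pik k)"
    and pik_greedy: "\<And>k. T_pi P r (pik k) (V k) = T_opt P r (V k)"
  shows "\<exists>K::nat. K > 0 \<and> (\<forall>k>K.
           supnorm (\<lambda>s. opt_gain P r s - gain P r (pik k) s)
             \<le> supnorm (\<lambda>s. T_opt P r (V k) s - V k s - opt_gain P r s) \<and>
           supnorm (\<lambda>s. T_opt P r (V k) s - V k s - opt_gain P r s)
             \<le> 2 * (\<Sum>i=0..k. (\<Prod>j=i+1..k. (1 - lam j)) * (lam i)\<^sup>2) * supnorm (\<lambda>s. V 0 s - h s))"
proof -
  let ?g = "opt_gain P r"
  have lam_le1: "lam k \<le> 1" for k
    using lam_lt1[of k] lam0 by (cases k) auto
  have h_bellman: "T_opt P r h s = h s + ?g s" for s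
    using mbe unfolding modified_bellman_def T_opt_def by blast
  have residual: "\<bar>T_opt P r (V k) s - V k s - ?g s\<bar>
      \<le> 2 * halpern_rate lam k * supnorm (\<lambda>s. V 0 s - h s)" for k s
    using V_rec[of "Suc _"]
    by (intro anchored_vi_residual_bound[OF mdp action_invariant_if_policy_invariant[OF gstar_inv]
          h_bellman lam0 lam_mono lam_le1 lam_nonneg]) auto
  have gain_error: "\<bar>?g s - gain P r (pik k) s\<bar>
      \<le> supnorm (\<lambda>s. T_opt P r (V k) s - V k s - ?g s)" for k s
    using pik_greedy[of k] abs_le_supnorm
    by (intro gain_error_le[OF mdp pik_policy gstar_inv[OF pik_policy], where V = "V k"]) simp
  show ?thesis
    using residual gain_error unfolding halpern_rate_def
    by (intro exI[of _ 1]) (auto intro: supnorm_leI)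
qed

end
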